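(* Let $V,W$ be finite-dimensional Hermitian vector spaces, $\tilde W=V\oplus V\oplus W$, and $B_1,B_2\in\mathrm{End}(V)$, $i\in\mathrm{Hom}(W,V)$, $j\in\mathrm{Hom}(V,W)$. Define right $\mathfrak{M}^{\rm I}_q$-linear maps $\alpha_{\rm I}:V\otimes\mathfrak{M}^{\rm I}_q\to\tilde W\otimes\mathfrak{M}^{\rm I}_q$, $\beta_{\rm I}:\tilde W\otimes\mathfrak{M}^{\rm I}_q\to V\otimes\mathfrak{M}^{\rm I}_q$ by $$\alpha_{\rm I}=\begin{pmatrix}B_1\otimes 1-1\otimes x_{21'}\\ B_2\otimes1-1\otimes x_{22'}\\ j\otimes 1\end{pmatrix},\qquad \beta_{\rm I}=\begin{pmatrix}-B_2\otimes1+1\otimes x_{22'} & B_1\otimes1-1\otimes x_{21'} & i\otimes1\end{pmatrix},$$ and their adjoints $$\beta_{\rm I}^\dagger=\begin{pmatrix}-B_2^\dagger\otimes1+1\otimes x_{11'}\\ B_1^\dagger\otimes1+1\otimes x_{12'}\\ i^\dagger\otimes1\end{pmatrix},\qquad \alpha_{\rm I}^\dagger=\begin{pmatrix}B_1^\dagger\otimes1+1\otimes x_{12'} & B_2^\dagger\otimes1-1\otimes x_{11'} & j^\dagger\otimes1\end{pmatrix}.$$ Then (1) $\beta_{\rm I}\alpha_{\rm I}=0$ if and only if $[B_1,B_2]+ij=0$; (2) $\beta_{\rm I}\beta_{\rm I}^\dagger=\alpha_{\rm I}^\dagger\alpha_{\rm I}$ if and only if $[B_1,B_1^\dagger]+[B_2,B_2^\dagger]+ii^\dagger-j^\dagger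 j=0$.
   Context: $q$ is a nonzero complex (e.g. positive real) parameter. $\mathfrak{M}^{\rm I}_q$ is the algebra generated by $x_{11'},x_{12'},x_{21'},x_{22'}$ subject to $x_{11'}x_{12'}=x_{12'}x_{11'}$, $x_{21'}x_{22'}=x_{22'}x_{21'}$, $[x_{11'},x_{22'}]+[x_{21'},x_{12'}]=0$, $x_{11'}x_{21'}=q^{-2}x_{21'}x_{11'}$, $x_{12'}x_{22'}=q^{-2}x_{22'}x_{12'}$, $x_{21'}x_{12'}=q^2x_{12'}x_{21'}$ (realized inside $\widetilde{SL}(2)_q$ as $x_{11'}=\delta g_{11'}$, $x_{12'}=q^{-1/2}\delta g_{12'}$, $x_{21'}=q^{1/2}\delta g_{21'}$, $x_{22'}=\delta g_{22'}$). For a finite-dimensional vector space $U$, $U\otimes\mathfrak{M}^{\rm I}_q$ is a free right $\mathfrak{M}^{\rm I}_q$-module; for linear maps $A:U_1\to U_2$ and $x\in\mathfrak{M}^{\rm I}_q$, $A\otimes x$ denotes the right-linear map $v\otimes f\mapsto Av\otimes xf$. Block matrices act in the obvious way, and $\dagger$ on $B_k,i,j$ is the Hermitian adjoint. *)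

theory Defs
  imports "HOL-Analysis.Analysis" "HOL-Library.Poly_Mapping"
begin

datatype gen = X11 | X12 | X21 | X22

text \<open>Words in the generators (free monoid, concatenation written as +).\<close>
datatype word = Word "gen list"

instantiation word :: monoid_add
begin
definition zero_word :: word where "zero_word = Word []"
fun plus_word :: "word \<Rightarrow> word \<Rightarrow> word" where
  "plus_word (Word u) (Word v) = Word (u @ v)"
instance
proof
  fix a b c :: word
  show "a + b + c = a + (b + c)" by (cases a; cases b; cases c) simp
  show "0 + a = a" by (cases a) (simp add: zero_word_def)
  show "a + 0 = a" by (cases a) (simp add: zero_word_def)
qed
end

text \<open>The free associative complex algebra on the four generators
  (noncommutative polynomials; multiplication is convolution over word concatenation).\<close>
type_synonym freealg = "word \<Rightarrow>\<^sub>0 complex"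

definition sc :: "complex \<Rightarrow> freealg" where
  "sc c = Poly_Mapping.single 0 c"

definition xg :: "gen \<Rightarrow> freealg" where
  "xg g = Poly_Mapping.single (Word [g]) 1"

text \<open>The defining relations of M^I_q, written as elements (lhs - rhs) of the free algebra.\<close>
definition MI_rels :: "complex \<Rightarrow> freealg set" where
  "MI_rels q = {
     xg X11 * xg X12 - xg X12 * xg X11,
     xg X21 * xg X22 - xg X22 * xg X21,
     (xg X11 * xg X22 - xg X22 * xg X11) + (xg X21 * xg X12 - xg X12 * xg X21),
     xg X11 * xg X21 - sc (inverse (q^2)) * xg X21 * xg X11,
     xg X12 * xg X22 - sc (inverse (q^2)) * xg X22 * xg X12,
     xg X21 * xg X12 - sc (q^2) * xg X12 * xg X21 }"

text \<open>The two-sided ideal generated by the relations; M^I_q = freealg / MI_ideal q.\<close>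
inductive_set MI_ideal :: "complex \<Rightarrow> freealg set" for q :: complex where
  gen_rel: "r \<in> MI_rels q \<Longrightarrow> r \<in> MI_ideal q"
| zero: "0 \<in> MI_ideal q"
| add: "a \<in> MI_ideal q \<Longrightarrow> b \<in> MI_ideal q \<Longrightarrow> a + b \<in> MI_ideal q"
| lmult: "a \<in> MI_ideal q \<Longrightarrow> c * a \<in> MI_ideal q"
| rmult: "a \<in> MI_ideal q \<Longrightarrow> a * c \<in> MI_ideal q"

text \<open>A right M-linear map between free modules C^a \<otimes> M and C^b \<otimes> M is a b\<times>a matrix
  with entries in M acting by left multiplication; composition is the matrix product.
  We represent entries by representatives in the free algebra; equality of two such
  maps in M^I_q means entrywise congruence modulo the ideal.\<close>
definition Meq :: "complex \<Rightarrow> freealg^'c^'r \<Rightarrow> freealg^'c^'r \<Rightarrow> bool" where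
  "Meq q P Q \<longleftrightarrow> (\<forall>k l. P$k$l - Q$k$l \<in> MI_ideal q)"

definition tens1 :: "complex^'c^'r \<Rightarrow> freealg^'c^'r" where
  "tens1 A = (\<chi> k l. sc (A$k$l))"

definition one_tens :: "freealg \<Rightarrow> freealg^'n^'n" where
  "one_tens x = (\<chi> k l. if k = l then x else 0)"

text \<open>Hermitian adjoint (conjugate transpose w.r.t. orthonormal bases).\<close>
definition adj :: "complex^'c^'r \<Rightarrow> complex^'r^'c" where
  "adj A = (\<chi> k l. cnj (A$l$k))"

text \<open>Index type of \<tilde>W = V \<oplus> V \<oplus> W is ('n + 'n) + 'm.\<close>

definition alphaI :: "complex^'n^'n \<Rightarrow> complex^'n^'n \<Rightarrow> complex^'n^'m
    \<Rightarrow> freealg^'n^(('n + 'n) + 'm)" where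
  "alphaI B1 B2 j = (\<chi> r. case r of
      Inl (Inl k) \<Rightarrow> (tens1 B1 - one_tens (xg X21))$k
    | Inl (Inr k) \<Rightarrow> (tens1 B2 - one_tens (xg X22))$k
    | Inr k \<Rightarrow> (tens1 j)$k)"

definition betaI :: "complex^'n^'n \<Rightarrow> complex^'n^'n \<Rightarrow> complex^'m^'n
    \<Rightarrow> freealg^(('n + 'n) + 'm)^'n" where
  "betaI B1 B2 i = (\<chi> k r. case r of
      Inl (Inl l) \<Rightarrow> (- tens1 B2 + one_tens (xg X22))$k$l
    | Inl (Inr l) \<Rightarrow> (tens1 B1 - one_tens (xg X21))$k$l
    | Inr l \<Rightarrow> (tens1 i)$k$l)"

definition betaI_dag :: "complex^'n^'n \<Rightarrow> complex^'n^'n \<Rightarrow> complex^'m^'n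
    \<Rightarrow> freealg^'n^(('n + 'n) + 'm)" where
  "betaI_dag B1 B2 i = (\<chi> r. case r of
      Inl (Inl k) \<Rightarrow> (- tens1 (adj B2) + one_tens (xg X11))$k
    | Inl (Inr k) \<Rightarrow> (tens1 (adj B1) + one_tens (xg X12))$k
    | Inr k \<Rightarrow> (tens1 (adj i))$k)"

definition alphaI_dag :: "complex^'n^'n \<Rightarrow> complex^'n^'n \<Rightarrow> complex^'n^'m
    \<Rightarrow> freealg^(('n + 'n) + 'm)^'n" where
  "alphaI_dag B1 B2 j = (\<chi> k r. case r of
      Inl (Inl l) \<Rightarrow> (tens1 (adj B1) + one_tens (xg X12))$k$l
    | Inl (Inr l) \<Rightarrow> (tens1 (adj B2) - one_tens (xg X11))$k$l
    | Inr l \<Rightarrow> (tens1 (adj j))$k$l)"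

end

theory Submission
  imports Defs
begin

(* The scalar entries commute with the generators, so the
  cross terms A \<otimes> x and x \<otimes> A cancel, and what remains is a scalar matrix plus the identity
  times an element of the ideal: for (1) the relation [x21', x22'] = 0, for (2) the relation
  [x11', x22'] + [x21', x12'] = 0. Every defining relation has zero constant term, and the
  constant term is multiplicative because the empty word has no nontrivial factorisation;
  hence the ideal contains no nonzero scalar, and the scalar matrix must vanish. *)

lemma sc_0: "sc 0 = 0"
  by (simp add: sc_def)

lemma sc_add: "sc (a + b) = sc a + sc b"
  by (simp add: sc_def single_add)

lemma sc_diff: "sc (a - b) = sc a - sc b"
  by (simp add: sc_def single_diff)

lemma sc_mult: "sc (a * b) = sc a * sc b"
  by (simp add: sc_def mult_single)

lemma sc_sum: "sc (sum f A) = (\<Sum>x\<in>A. sc (f x))"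
  by (induction A rule: infinite_finite_induct) (auto simp: sc_0 sc_add)

lemma lookup_sc_mult: "Poly_Mapping.lookup (sc c * x) w = c * Poly_Mapping.lookup x w"
  unfolding sc_def Poly_Mapping.lookup_mult lookup_single by (simp add: when_mult)

lemma lookup_mult_sc: "Poly_Mapping.lookup (x * sc c) w = Poly_Mapping.lookup x w * c"
proof -
  have "(\<Sum>v. (c when 0 = v) when w = u + v) = (c when w = u)" for u :: word
    by (subst when_commute) simp
  then show ?thesis
    unfolding sc_def Poly_Mapping.lookup_mult lookup_single
    by (simp add: mult_when eq_commute[of w])
qed

lemma sc_central: "sc c * x = x * sc c"
  by (rule poly_mapping_eqI) (simp add: lookup_sc_mult lookup_mult_sc mult.commute)

lemma plus_word_eq_0_iff: "(u::word) + v = 0 \<longleftrightarrow> u = 0 \<and> v = 0"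
  by (cases u; cases v) (simp add: zero_word_def)

lemma lookup_mult_0:
  fixes a b :: freealg
  shows "Poly_Mapping.lookup (a * b) 0 = Poly_Mapping.lookup a 0 * Poly_Mapping.lookup b 0"
proof -
  have "Poly_Mapping.lookup (a * b) 0
      = (\<Sum>u. Poly_Mapping.lookup a u * (Poly_Mapping.lookup b 0 when u = 0))"
    unfolding Poly_Mapping.lookup_mult
    by (rule Sum_any.cong) (simp add: plus_word_eq_0_iff when_def eq_commute[of 0])
  then show ?thesis
    by (simp add: mult_when)
qed

lemma lookup_xg_0: "Poly_Mapping.lookup (xg g) 0 = 0"
  by (simp add: xg_def lookup_single zero_word_def)

lemma lookup_sc_0: "Poly_Mapping.lookup (sc c) 0 = c"
  by (simp add: sc_def)

lemma lookup_0_MI_ideal: "p \<in> MI_ideal q \<Longrightarrow> Poly_Mapping.lookup p 0 = 0"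
proof (induction rule: MI_ideal.induct)
  case (gen_rel r)
  then show ?case
    by (auto simp: MI_rels_def lookup_mult_0 lookup_minus lookup_add lookup_xg_0 lookup_sc_0)
qed (auto simp: lookup_mult_0 lookup_add)

lemma sc_in_MI_ideal_iff: "sc c \<in> MI_ideal q \<longleftrightarrow> c = 0"
  using lookup_0_MI_ideal[of "sc c" q] by (auto simp: lookup_sc_0 sc_0 intro: MI_ideal.zero)

lemma MI_ideal_uminus: "a \<in> MI_ideal q \<Longrightarrow> - a \<in> MI_ideal q"
  using MI_ideal.lmult[of a q "-1"] by simp

lemma MI_ideal_diff: "a \<in> MI_ideal q \<Longrightarrow> b \<in> MI_ideal q \<Longrightarrow> a - b \<in> MI_ideal q"
  using MI_ideal.add[OF _ MI_ideal_uminus[of b]] by simp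

lemma Meq_iff_diff_0: "Meq q P Q \<longleftrightarrow> Meq q (P - Q) 0"
  by (simp add: Meq_def)

lemma Meq_tens1_add_one_tens_0_iff:
  fixes C :: "complex^'r^'r"
  assumes "r \<in> MI_ideal q"
  shows "Meq q (tens1 C + one_tens r) 0 \<longleftrightarrow> C = 0"
proof
  assume "Meq q (tens1 C + one_tens r) 0"
  then have "sc (C$k$l) + (if k = l then r else 0) - (if k = l then r else 0) \<in> MI_ideal q"
    for k l
    using assms by (intro MI_ideal_diff) (auto simp: Meq_def tens1_def one_tens_def MI_ideal.zero)
  then show "C = 0"
    by (simp add: vec_eq_iff sc_in_MI_ideal_iff)
qed (use assms in \<open>auto simp: Meq_def tens1_def one_tens_def sc_0 MI_ideal.zero\<close>)

lemma matrix_add_rdistrib: "((A::'a::ring_1^'n::finite^'m) + B) ** (C::'a^'k^'n) = A ** C + B ** C"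
  by (simp add: matrix_matrix_mult_def vec_eq_iff ring_distribs sum.distrib)

lemma matrix_diff_ldistrib: "(A::'a::ring_1^'n::finite^'m) ** (B - C) = A ** B - A ** C"
  by (simp add: matrix_matrix_mult_def vec_eq_iff ring_distribs sum_subtractf)

lemma matrix_diff_rdistrib: "((A::'a::ring_1^'n::finite^'m) - B) ** (C::'a^'k^'n) = A ** C - B ** C"
  by (simp add: matrix_matrix_mult_def vec_eq_iff ring_distribs sum_subtractf)

lemma block_row_matrix_mult_block_column:
  "(\<chi> k r. case r of
       Inl (Inl l) \<Rightarrow> (P::'a::ring_1^'n::finite^'k)$k$l
     | Inl (Inr l) \<Rightarrow> (Q::'a^'n^'k)$k$l
     | Inr l \<Rightarrow> (R::'a^'m::finite^'k)$k$l)
   ** (\<chi> r. case r of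
       Inl (Inl k) \<Rightarrow> (P'::'a^'c^'n)$k
     | Inl (Inr k) \<Rightarrow> (Q'::'a^'c^'n)$k
     | Inr k \<Rightarrow> (R'::'a^'c^'m)$k)
   = P ** P' + Q ** Q' + R ** R'"
  by (simp add: matrix_matrix_mult_def vec_eq_iff sum.Plus[of UNIV UNIV, simplified])

lemma tens1_add: "tens1 (A + B) = tens1 A + tens1 B"
  by (simp add: tens1_def vec_eq_iff sc_add)

lemma tens1_diff: "tens1 (A - B) = tens1 A - tens1 B"
  by (simp add: tens1_def vec_eq_iff sc_diff)

lemma tens1_matrix_mult:
  "tens1 (A::complex^'n::finite^'m) ** tens1 (B::complex^'k^'n) = tens1 (A ** B)"
  by (simp add: matrix_matrix_mult_def tens1_def vec_eq_iff sc_sum sc_mult)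

lemma one_tens_add: "one_tens (x + y) = (one_tens x + one_tens y :: freealg^'n^'n)"
  by (simp add: one_tens_def vec_eq_iff)

lemma one_tens_diff: "one_tens (x - y) = (one_tens x - one_tens y :: freealg^'n^'n)"
  by (simp add: one_tens_def vec_eq_iff)

lemma one_tens_matrix_mult:
  "one_tens x ** (one_tens y :: freealg^'n::finite^'n) = one_tens (x * y)"
  by (simp add: matrix_matrix_mult_def one_tens_def vec_eq_iff if_distrib[where f="\<lambda>y. y * _"]
      cong: if_cong)

lemma one_tens_tens1_commute:
  "one_tens x ** tens1 (A::complex^'n::finite^'m::finite) = tens1 A ** one_tens x"
  by (simp add: matrix_matrix_mult_def tens1_def one_tens_def vec_eq_iff sc_central
      if_distrib[where f="\<lambda>y. y * _"] if_distrib[where f="\<lambda>y. _ * y"] cong: if_cong)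

lemmas block_matrix_simps =
  matrix_add_ldistrib matrix_add_rdistrib
  matrix_diff_ldistrib matrix_diff_rdistrib
  tens1_add tens1_diff tens1_matrix_mult one_tens_add one_tens_diff one_tens_matrix_mult
  one_tens_tens1_commute

lemma betaI_alphaI:
  "betaI B1 B2 i ** alphaI B1 B2 j
     = tens1 (B1 ** B2 - B2 ** B1 + i ** j) + one_tens (xg X21 * xg X22 - xg X22 * xg X21)"
  unfolding betaI_def alphaI_def block_row_matrix_mult_block_column
  by (simp add: block_matrix_simps algebra_simps)

lemma betaI_betaI_dag_diff_alphaI_dag_alphaI:
  "betaI B1 B2 i ** betaI_dag B1 B2 i - alphaI_dag B1 B2 j ** alphaI B1 B2 j
     = tens1 ((B1 ** adj B1 - adj B1 ** B1) + (B2 ** adj B2 - adj B2 ** B2)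
              + i ** adj i - adj j ** j)
       + one_tens (- ((xg X11 * xg X22 - xg X22 * xg X11) + (xg X21 * xg X12 - xg X12 * xg X21)))"
  unfolding betaI_def alphaI_def betaI_dag_def alphaI_dag_def block_row_matrix_mult_block_column
  by (simp add: block_matrix_simps algebra_simps)

theorem proposition3p8:
  fixes q :: complex
    and B1 B2 :: "complex^'n::finite^'n"
    and i :: "complex^'m::finite^'n"
    and j :: "complex^'n^'m"
  assumes "q \<noteq> 0"
  shows "(Meq q (betaI B1 B2 i ** alphaI B1 B2 j) 0
            \<longleftrightarrow> B1 ** B2 - B2 ** B1 + i ** j = 0)
       \<and> (Meq q (betaI B1 B2 i ** betaI_dag B1 B2 i) (alphaI_dag B1 B2 j ** alphaI B1 B2 j)
            \<longleftrightarrow> (B1 ** adj B1 - adj B1 ** B1) + (B2 ** adj B2 - adj B2 ** B2)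
                 + i ** adj i - adj j ** j = 0)"
proof -
  have "xg X21 * xg X22 - xg X22 * xg X21 \<in> MI_ideal q"
    by (rule MI_ideal.gen_rel) (simp add: MI_rels_def)
  moreover have "- ((xg X11 * xg X22 - xg X22 * xg X11) + (xg X21 * xg X12 - xg X12 * xg X21))
      \<in> MI_ideal q"
    by (intro MI_ideal_uminus MI_ideal.gen_rel) (simp add: MI_rels_def)
  ultimately show ?thesis
    by (simp add: Meq_iff_diff_0[of q _ "alphaI_dag B1 B2 j ** alphaI B1 B2 j"] betaI_alphaI
        betaI_betaI_dag_diff_alphaI_dag_alphaI Meq_tens1_add_one_tens_0_iff)
qed

end
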